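(* Let $E$ be a finite-dimensional real vector space with dual space $E^{*}$. An extended-real-valued function $h$ on $E$ is generalized affine if and only if there exist finite sequences (possibly of length zero) of vectors $\eta_1,\dots,\eta_j\in E^{*}$ and scalars $\delta_1,\dots,\delta_j$ such that $\eta_1,\dots,\eta_j$ are linearly independent and $h$ has the following form. Define $H_0=E$ and, for $0<i\le j$, $$H_i=\{x\in H_{i-1}:\langle x,\eta_i\rangle=\delta_i\},\quad C_i^{+}=\{x\in H_{i-1}:\langle x,\eta_i\rangle>\delta_i\},\quad C_i^{-}=\{x\in H_{i-1}:\langle x,\eta_i\rangle<\delta_i\},$$ all of these sets (if any) being nonempty. Then $h(x)=+\infty$ whenever $x\in C_i^{+}$ for some $i$, $h(x)=-\infty$ whenever $x\in C_i^{-}$ for some $i$, and $h$ restricted to $H_j$ is either affine or constant, where $+\infty$ and $-\infty$ are allowed as constant values.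
   Context: $\langle\cdot,\cdot\rangle$ is the canonical bilinear pairing of $E$ and $E^{*}$. A generalized affine function is a function $E\to\mathbb{R}\cup\{\pm\infty\}$ that is both convex and concave in the extended-real-valued sense. When $j=0$, the statement says $h$ is affine on $E$ or constant on $E$. *)

theory Defs
  imports "HOL-Analysis.Analysis"
begin

definition ext_convex :: "('a::real_vector \<Rightarrow> ereal) \<Rightarrow> bool" where
  "ext_convex h \<longleftrightarrow> convex {(x, \<mu>::real). h x \<le> ereal \<mu>}"

definition ext_concave :: "('a::real_vector \<Rightarrow> ereal) \<Rightarrow> bool" where
  "ext_concave h \<longleftrightarrow> convex {(x, \<mu>::real). ereal \<mu> \<le> h x}"

definition generalized_affine :: "('a::real_vector \<Rightarrow> ereal) \<Rightarrow> bool" where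
  "generalized_affine h \<longleftrightarrow> ext_convex h \<and> ext_concave h"

definition lin_indep_functionals :: "('a \<Rightarrow> real) list \<Rightarrow> bool" where
  "lin_indep_functionals eta \<longleftrightarrow>
     (\<forall>c::nat \<Rightarrow> real. (\<forall>x. (\<Sum>i<length eta. c i * (eta ! i) x) = 0) \<longrightarrow>
        (\<forall>i<length eta. c i = 0))"

text \<open>H i (0-indexed lists: eta ! i is the paper's eta_(i+1)).\<close>
fun Hset :: "('a \<Rightarrow> real) list \<Rightarrow> real list \<Rightarrow> nat \<Rightarrow> 'a set" where
  "Hset eta delta 0 = UNIV"
| "Hset eta delta (Suc i) = {x \<in> Hset eta delta i. (eta ! i) x = delta ! i}"

definition Cplus :: "('a \<Rightarrow> real) list \<Rightarrow> real list \<Rightarrow> nat \<Rightarrow> 'a set" where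
  "Cplus eta delta i = {x \<in> Hset eta delta i. (eta ! i) x > delta ! i}"

definition Cminus :: "('a \<Rightarrow> real) list \<Rightarrow> real list \<Rightarrow> nat \<Rightarrow> 'a set" where
  "Cminus eta delta i = {x \<in> Hset eta delta i. (eta ! i) x < delta ! i}"

definition affine_on_set :: "('a::real_vector \<Rightarrow> ereal) \<Rightarrow> 'a set \<Rightarrow> bool" where
  "affine_on_set h S \<longleftrightarrow> (\<exists>l c. linear l \<and> (\<forall>x\<in>S. h x = ereal (l x + c)))"

definition constant_on_set :: "('a \<Rightarrow> ereal) \<Rightarrow> 'a set \<Rightarrow> bool" where
  "constant_on_set h S \<longleftrightarrow> (\<exists>c::ereal. \<forall>x\<in>S. h x = c)"

end

(* Epigraph and hypograph convexity make both {h = \<infinity>} and {h < \<infinity>} convex.  If both are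
   nonempty, a hyperplane a \<bullet> x = d separates them inside the current affine set; then h = \<infinity>
   above it and h = -\<infinity> below it, since mixing a point of value > -\<infinity> below the hyperplane
   with a point of value \<infinity> would create points of value \<infinity> below it.  Restricting to the
   hyperplane lowers the affine dimension, so the construction terminates, with h constant
   (\<infinity> or -\<infinity>) or finite, hence affine, on the last set.  Conversely, each layer preserves
   convexity of the epigraph, and negating h, the functionals and the levels turns the
   hypograph into an epigraph. *)

theory Submission
  imports Defs
begin

section \<open>Epigraphs and hypographs of extended-real functions\<close>

definition ereal_epigraph :: "'a set \<Rightarrow> ('a \<Rightarrow> ereal) \<Rightarrow> ('a \<times> real) set" where
  "ereal_epigraph A h = {(x, \<mu>). x \<in> A \<and> h x \<le> ereal \<mu>}"

definition ereal_hypograph :: "'a set \<Rightarrow> ('a \<Rightarrow> ereal) \<Rightarrow> ('a \<times> real) set" where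
  "ereal_hypograph A h = {(x, \<mu>). x \<in> A \<and> ereal \<mu> \<le> h x}"

lemma generalized_affine_iff_convex_graphs:
  "generalized_affine h \<longleftrightarrow> convex (ereal_epigraph UNIV h) \<and> convex (ereal_hypograph UNIV h)"
  by (simp add: generalized_affine_def ext_convex_def ext_concave_def
      ereal_epigraph_def ereal_hypograph_def)

lemma ereal_hypograph_eq_reflected_epigraph:
  "ereal_hypograph A h = (\<lambda>p. (fst p, - snd p)) ` ereal_epigraph A (\<lambda>x. - h x)"
  unfolding ereal_hypograph_def ereal_epigraph_def
  by (auto simp: image_iff ereal_uminus_le_reorder) (metis minus_minus)

lemma convex_ereal_hypograph_iff:
  fixes h :: "'a::real_vector \<Rightarrow> ereal"
  shows "convex (ereal_hypograph A h) \<longleftrightarrow> convex (ereal_epigraph A (\<lambda>x. - h x))"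
proof -
  have "linear (\<lambda>p::'a \<times> real. (fst p, - snd p))"
    by (simp add: linear_iff)
  moreover have "inj (\<lambda>p::'a \<times> real. (fst p, - snd p))"
    by (auto simp: inj_on_def prod_eq_iff)
  ultimately show ?thesis
    by (simp add: ereal_hypograph_eq_reflected_epigraph)
qed

lemma convex_ereal_epigraphI:
  assumes "\<And>x y m n u v. x \<in> A \<Longrightarrow> y \<in> A \<Longrightarrow> h x \<le> ereal m \<Longrightarrow> h y \<le> ereal n \<Longrightarrow>
      0 \<le> u \<Longrightarrow> 0 \<le> v \<Longrightarrow> u + v = 1 \<Longrightarrow>
      u *\<^sub>R x + v *\<^sub>R y \<in> A \<and> h (u *\<^sub>R x + v *\<^sub>R y) \<le> ereal (u * m + v * n)"
  shows "convex (ereal_epigraph A h)"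
  using assms unfolding convex_def ereal_epigraph_def by auto

lemma convex_ereal_epigraphD:
  assumes "convex (ereal_epigraph A h)" "x \<in> A" "y \<in> A" "h x \<le> ereal m" "h y \<le> ereal n"
    and "0 \<le> u" "0 \<le> v" "u + v = 1"
  shows "u *\<^sub>R x + v *\<^sub>R y \<in> A \<and> h (u *\<^sub>R x + v *\<^sub>R y) \<le> ereal (u * m + v * n)"
  using convexD[OF assms(1), of "(x, m)" "(y, n)" u v] assms(2-)
  by (simp add: ereal_epigraph_def)

lemma convex_ereal_epigraph_Int:
  assumes "convex C" "convex (ereal_epigraph A h)"
  shows "convex (ereal_epigraph (A \<inter> C) h)"
proof -
  have "ereal_epigraph (A \<inter> C) h = ereal_epigraph A h \<inter> C \<times> UNIV"
    by (auto simp: ereal_epigraph_def)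
  then show ?thesis
    using assms by (simp add: convex_Int convex_Times)
qed

lemma convex_ereal_hypograph_Int:
  fixes h :: "'a::real_vector \<Rightarrow> ereal"
  assumes "convex C" "convex (ereal_hypograph A h)"
  shows "convex (ereal_hypograph (A \<inter> C) h)"
  using assms by (simp add: convex_ereal_hypograph_iff convex_ereal_epigraph_Int)

text \<open>\<open>(x, \<mu>)\<close> lies in the epigraph for every \<open>\<mu>\<close>, so the combination lies below every height.\<close>

lemma ereal_epigraph_mix_minus_infinity:
  fixes h :: "'a::real_vector \<Rightarrow> ereal"
  assumes epi: "convex (ereal_epigraph A h)"
    and "x \<in> A" "y \<in> A" "h x = -\<infinity>" "h y \<noteq> \<infinity>" "0 < u" "u \<le> 1"
  shows "u *\<^sub>R x + (1 - u) *\<^sub>R y \<in> A \<and> h (u *\<^sub>R x + (1 - u) *\<^sub>R y) = -\<infinity>"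
proof -
  obtain n where n: "h y \<le> ereal n"
    using \<open>h y \<noteq> \<infinity>\<close> by (cases "h y") auto
  have below: "u *\<^sub>R x + (1 - u) *\<^sub>R y \<in> A \<and> h (u *\<^sub>R x + (1 - u) *\<^sub>R y) \<le> ereal B" for B
  proof -
    have "u * ((B - (1 - u) * n) / u) + (1 - u) * n = B"
      using \<open>0 < u\<close> by simp
    then show ?thesis
      using convex_ereal_epigraphD[OF epi, of x y "(B - (1 - u) * n) / u" n u "1 - u"] assms n
      by simp
  qed
  then show ?thesis
    using ereal_bot by blast
qed

lemma convex_minus_infinity_set:
  fixes h :: "'a::real_vector \<Rightarrow> ereal"
  assumes "convex (ereal_epigraph A h)"
  shows "convex {x \<in> A. h x = -\<infinity>}"
proof (rule convexI)
  fix x y :: 'a and u v :: real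
  assume "x \<in> {x \<in> A. h x = -\<infinity>}" "y \<in> {x \<in> A. h x = -\<infinity>}" "0 \<le> u" "0 \<le> v" "u + v = 1"
  then show "u *\<^sub>R x + v *\<^sub>R y \<in> {x \<in> A. h x = -\<infinity>}"
    using ereal_epigraph_mix_minus_infinity[OF assms, of x y u]
    by (cases "u = 0") (auto simp: eq_diff_eq[symmetric])
qed

section \<open>Stratified functions are generalized affine\<close>

fun Hset_on :: "'a set \<Rightarrow> ('a \<Rightarrow> real) list \<Rightarrow> real list \<Rightarrow> nat \<Rightarrow> 'a set" where
  "Hset_on A eta delta 0 = A"
| "Hset_on A eta delta (Suc i) = {x \<in> Hset_on A eta delta i. (eta ! i) x = delta ! i}"

lemma Hset_eq_Hset_on_UNIV: "Hset eta delta i = Hset_on UNIV eta delta i"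
  by (induction i) auto

lemma Hset_on_Cons_Suc: "Hset_on A (e # es) (d # ds) (Suc i) = Hset_on {x \<in> A. e x = d} es ds i"
  by (induction i) auto

lemma Hset_on_level:
  assumes "x \<in> Hset_on A eta delta k" "i < k"
  shows "(eta ! i) x = delta ! i"
  using assms
proof (induction k)
  case (Suc k)
  then show ?case by (cases "i = k") auto
qed simp

text \<open>The normal form of the theorem relative to an ambient set \<open>A\<close> (which replaces \<open>E\<close>);
  the nonemptiness requirements are kept separately in \<open>proper_splits\<close>.\<close>

definition stratified_on ::
    "('a::real_vector \<Rightarrow> ereal) \<Rightarrow> 'a set \<Rightarrow> ('a \<Rightarrow> real) list \<Rightarrow> real list \<Rightarrow> bool" where
  "stratified_on h A eta delta \<longleftrightarrow>
     length delta = length eta \<and> (\<forall>i<length eta. linear (eta ! i)) \<and>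
     (\<forall>i<length eta. \<forall>x\<in>Hset_on A eta delta i. (eta ! i) x > delta ! i \<longrightarrow> h x = \<infinity>) \<and>
     (\<forall>i<length eta. \<forall>x\<in>Hset_on A eta delta i. (eta ! i) x < delta ! i \<longrightarrow> h x = -\<infinity>) \<and>
     (affine_on_set h (Hset_on A eta delta (length eta)) \<or>
      constant_on_set h (Hset_on A eta delta (length eta)))"

lemma stratified_on_Nil:
  "stratified_on h A [] delta \<longleftrightarrow> delta = [] \<and> (affine_on_set h A \<or> constant_on_set h A)"
  by (simp add: stratified_on_def)

lemma stratified_on_Cons:
  "stratified_on h A (e # es) (d # ds) \<longleftrightarrow>
     linear e \<and> (\<forall>x\<in>A. e x > d \<longrightarrow> h x = \<infinity>) \<and> (\<forall>x\<in>A. e x < d \<longrightarrow> h x = -\<infinity>) \<and>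
     stratified_on h {x \<in> A. e x = d} es ds"
  unfolding stratified_on_def
  by (simp only: length_Cons All_less_Suc2 Hset_on_Cons_Suc nth_Cons_0 nth_Cons_Suc
      Hset_on.simps(1)) auto

lemma stratified_on_ConsE:
  assumes "stratified_on h A (e # es) delta"
  obtains d ds where "delta = d # ds"
  using assms by (cases delta) (auto simp: stratified_on_def)

definition proper_splits :: "'a set \<Rightarrow> ('a \<Rightarrow> real) list \<Rightarrow> real list \<Rightarrow> bool" where
  "proper_splits A eta delta \<longleftrightarrow>
     (\<forall>i<length eta. Hset_on A eta delta (Suc i) \<noteq> {} \<and>
        {x \<in> Hset_on A eta delta i. (eta ! i) x > delta ! i} \<noteq> {} \<and>
        {x \<in> Hset_on A eta delta i. (eta ! i) x < delta ! i} \<noteq> {})"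

lemma proper_splits_Cons:
  "proper_splits A (e # es) (d # ds) \<longleftrightarrow>
     {x \<in> A. e x = d} \<noteq> {} \<and> {x \<in> A. e x > d} \<noteq> {} \<and> {x \<in> A. e x < d} \<noteq> {} \<and>
     proper_splits {x \<in> A. e x = d} es ds"
  unfolding proper_splits_def
  by (simp only: length_Cons All_less_Suc2 Hset_on_Cons_Suc nth_Cons_0 nth_Cons_Suc
      Hset_on.simps(1) conj_assoc)

lemma convex_ereal_epigraph_affine_or_constant:
  assumes "convex A" "affine_on_set h A \<or> constant_on_set h A"
  shows "convex (ereal_epigraph A h)"
  using assms(2)
proof
  assume "affine_on_set h A"
  then obtain l c where l: "linear l" "\<forall>x\<in>A. h x = ereal (l x + c)"
    unfolding affine_on_set_def by blast
  show ?thesis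
  proof (rule convex_ereal_epigraphI)
    fix x y and m n u v :: real
    assume xy: "x \<in> A" "y \<in> A" "h x \<le> ereal m" "h y \<le> ereal n"
      and uv: "0 \<le> u" "0 \<le> v" "u + v = 1"
    have z: "u *\<^sub>R x + v *\<^sub>R y \<in> A"
      using convexD[OF \<open>convex A\<close>] xy uv by blast
    have "l (u *\<^sub>R x + v *\<^sub>R y) + c = u * l x + v * l y + (u + v) * c"
      using l(1) uv(3) by (simp add: linear_add linear_scale)
    also have "\<dots> = u * (l x + c) + v * (l y + c)"
      by (simp add: algebra_simps)
    also have "\<dots> \<le> u * m + v * n"
      using xy l(2) uv by (simp add: add_mono mult_left_mono)
    finally show "u *\<^sub>R x + v *\<^sub>R y \<in> A \<and> h (u *\<^sub>R x + v *\<^sub>R y) \<le> ereal (u * m + v * n)"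
      using z l(2) by simp
  qed
next
  assume "constant_on_set h A"
  then obtain c where c: "\<forall>x\<in>A. h x = c"
    unfolding constant_on_set_def by blast
  have "convex {\<mu>. c \<le> ereal \<mu>}"
    by (cases c) (simp_all flip: atLeast_def)
  moreover have "ereal_epigraph A h = A \<times> {\<mu>. c \<le> ereal \<mu>}"
    using c by (auto simp: ereal_epigraph_def)
  ultimately show ?thesis
    using assms(1) by (simp add: convex_Times)
qed

text \<open>Epigraph points satisfy \<open>e x \<le> d\<close>; a combination of two of them either lies strictly below
  the level \<open>d\<close>, where \<open>h = -\<infinity>\<close>, or is trivial, or combines two points of the level set.\<close>

lemma convex_ereal_epigraph_split:
  fixes h :: "'a::real_vector \<Rightarrow> ereal" and e :: "'a \<Rightarrow> real"
  assumes "convex A" "linear e"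
    and above: "\<forall>x\<in>A. e x > d \<longrightarrow> h x = \<infinity>"
    and below: "\<forall>x\<in>A. e x < d \<longrightarrow> h x = -\<infinity>"
    and level: "convex (ereal_epigraph {x \<in> A. e x = d} h)"
  shows "convex (ereal_epigraph A h)"
proof (rule convex_ereal_epigraphI)
  fix x y and m n u v :: real
  assume xy: "x \<in> A" "y \<in> A" "h x \<le> ereal m" "h y \<le> ereal n" and uv: "0 \<le> u" "0 \<le> v" "u + v = 1"
  let ?z = "u *\<^sub>R x + v *\<^sub>R y"
  have z: "?z \<in> A"
    using convexD[OF \<open>convex A\<close>] xy uv by blast
  have below_level: "e z \<le> d" if "z \<in> A" "h z \<le> ereal \<mu>" for z \<mu>
    using above that by force
  have "e x \<le> d" "e y \<le> d"
    using below_level xy by blast+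
  have ez: "e ?z = u * e x + v * e y"
    using \<open>linear e\<close> by (simp add: linear_add linear_scale)
  show "?z \<in> A \<and> h ?z \<le> ereal (u * m + v * n)"
  proof (cases "e ?z < d")
    case True
    then show ?thesis using below z by simp
  next
    case False
    have "u * (d - e x) + v * (d - e y) = (u + v) * d - e ?z"
      by (simp add: ez algebra_simps)
    then have "u * (d - e x) + v * (d - e y) \<le> 0"
      using False uv(3) by simp
    moreover have "0 \<le> u * (d - e x)" "0 \<le> v * (d - e y)"
      using \<open>e x \<le> d\<close> \<open>e y \<le> d\<close> uv by simp_all
    ultimately have "u * (d - e x) = 0" "v * (d - e y) = 0"
      by linarith+
    then consider "u = 0" "v = 1" | "v = 0" "u = 1" | "e x = d" "e y = d"
      using uv(3) by fastforce
    then show ?thesis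
    proof cases
      case 3
      then show ?thesis
        using convex_ereal_epigraphD[OF level, of x y m n u v] xy uv by simp
    qed (use xy in simp_all)
  qed
qed

lemma convex_ereal_epigraph_stratified:
  assumes "convex A" "stratified_on h A eta delta"
  shows "convex (ereal_epigraph A h)"
  using assms
proof (induction eta arbitrary: A delta)
  case Nil
  then show ?case
    by (simp add: stratified_on_Nil convex_ereal_epigraph_affine_or_constant)
next
  case (Cons e es)
  obtain d ds where delta: "delta = d # ds"
    using Cons.prems by (blast elim: stratified_on_ConsE)
  have split: "linear e" "\<forall>x\<in>A. e x > d \<longrightarrow> h x = \<infinity>" "\<forall>x\<in>A. e x < d \<longrightarrow> h x = -\<infinity>"
    "stratified_on h {x \<in> A. e x = d} es ds"
    using Cons.prems(2) by (simp_all add: delta stratified_on_Cons)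
  have "{x \<in> A. e x = d} = A \<inter> e -` {d}"
    by blast
  then have "convex {x \<in> A. e x = d}"
    using convex_Int[OF Cons.prems(1) convex_linear_vimage[OF split(1) convex_singleton]] by simp
  then show ?case
    using convex_ereal_epigraph_split[OF Cons.prems(1) split(1-3)] Cons.IH split(4) by blast
qed

lemma stratified_on_uminus:
  "stratified_on h A eta delta \<Longrightarrow>
     stratified_on (\<lambda>x. - h x) A (map (\<lambda>e x. - e x) eta) (map uminus delta)"
proof (induction eta arbitrary: A delta)
  case Nil
  then have "delta = []" "affine_on_set h A \<or> constant_on_set h A"
    by (simp_all add: stratified_on_Nil)
  moreover have "affine_on_set (\<lambda>x. - h x) A" if affine: "affine_on_set h A"
  proof -
    obtain l c where "linear l" "\<forall>x\<in>A. h x = ereal (l x + c)"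
      using affine unfolding affine_on_set_def by blast
    then have "linear (\<lambda>x. - l x)" "\<forall>x\<in>A. - h x = ereal (- l x + - c)"
      by (simp_all add: linear_compose_neg)
    then show ?thesis
      unfolding affine_on_set_def by blast
  qed
  moreover have "constant_on_set (\<lambda>x. - h x) A" if "constant_on_set h A"
    using that unfolding constant_on_set_def by force
  ultimately show ?case
    by (simp add: stratified_on_Nil) blast
next
  case (Cons e es)
  obtain d ds where delta: "delta = d # ds"
    using Cons.prems by (blast elim: stratified_on_ConsE)
  have "linear e" "\<forall>x\<in>A. e x > d \<longrightarrow> h x = \<infinity>" "\<forall>x\<in>A. e x < d \<longrightarrow> h x = -\<infinity>"
    "stratified_on h {x \<in> A. e x = d} es ds"
    using Cons.prems by (simp_all add: delta stratified_on_Cons)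
  moreover have "{x \<in> A. - e x = - d} = {x \<in> A. e x = d}"
    by simp
  ultimately show ?case
    using Cons.IH by (auto simp: delta stratified_on_Cons linear_compose_neg)
qed

lemma convex_ereal_hypograph_stratified:
  "convex A \<Longrightarrow> stratified_on h A eta delta \<Longrightarrow> convex (ereal_hypograph A h)"
  unfolding convex_ereal_hypograph_iff
  by (rule convex_ereal_epigraph_stratified[OF _ stratified_on_uminus])

section \<open>Generalized affine functions are stratified\<close>

lemma affine_combination_if_convex_combination:
  fixes H :: "'a::real_vector \<Rightarrow> real"
  assumes "affine A"
    and convex_comb: "\<And>x y u. x \<in> A \<Longrightarrow> y \<in> A \<Longrightarrow> 0 \<le> u \<Longrightarrow> u \<le> 1 \<Longrightarrow>
      H (u *\<^sub>R x + (1 - u) *\<^sub>R y) = u * H x + (1 - u) * H y"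
    and "x \<in> A" "y \<in> A"
  shows "H (u *\<^sub>R x + (1 - u) *\<^sub>R y) = u * H x + (1 - u) * H y"
proof -
  have extrapolate: "H (u *\<^sub>R x + (1 - u) *\<^sub>R y) = u * H x + (1 - u) * H y"
    if "x \<in> A" "y \<in> A" "u > 1" for x y u
  proof -
    define w where "w = u *\<^sub>R x + (1 - u) *\<^sub>R y"
    have "w \<in> A"
      unfolding w_def using mem_affine[OF \<open>affine A\<close> that(1,2)] by simp
    have "(1/u) *\<^sub>R w + (1 - 1/u) *\<^sub>R y = x"
      unfolding w_def using that(3) by (simp add: algebra_simps)
    then have "H x = (1/u) * H w + (1 - 1/u) * H y"
      using convex_comb[OF \<open>w \<in> A\<close> that(2), of "1/u"] that(3) by simp
    then have "u * H x = H w + (u - 1) * H y"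
      using that(3) by (simp add: field_simps)
    then show ?thesis
      unfolding w_def by (simp add: algebra_simps)
  qed
  consider "u < 0" | "0 \<le> u" "u \<le> 1" | "u > 1"
    by linarith
  then show ?thesis
  proof cases
    case 1
    then have "H ((1 - u) *\<^sub>R y + (1 - (1 - u)) *\<^sub>R x) = (1 - u) * H y + (1 - (1 - u)) * H x"
      using extrapolate[OF assms(4,3), of "1 - u"] by simp
    then show ?thesis by (simp add: algebra_simps)
  qed (use convex_comb assms(3,4) extrapolate in auto)
qed

lemma linear_extension_from_subspace:
  fixes f :: "'a::real_vector \<Rightarrow> real"
  assumes "subspace L"
    and add: "\<And>v w. v \<in> L \<Longrightarrow> w \<in> L \<Longrightarrow> f (v + w) = f v + f w"
    and scale: "\<And>t v. v \<in> L \<Longrightarrow> f (t *\<^sub>R v) = t * f v"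
  obtains g where "linear g" "\<And>v. v \<in> L \<Longrightarrow> g v = f v"
proof -
  obtain B where B: "B \<subseteq> L" "independent B" "L \<subseteq> span B"
    by (rule maximal_independent_subset)
  obtain g where g: "linear g" "\<forall>x\<in>B. g x = f x"
    using linear_independent_extend[OF B(2)] by blast
  have "subspace {v. v \<in> L \<and> g v = f v}"
    using \<open>subspace L\<close> add scale[of 0 0] g(1)
    by (auto simp: subspace_def linear_add linear_scale linear_0 scale)
  then have "v \<in> L \<and> g v = f v" if "v \<in> span B" for v
    using that span_induct[of v B "\<lambda>v. v \<in> L \<and> g v = f v"] g(2) B(1) by auto
  then show ?thesis
    using that g(1) B(3) by blast
qed

lemma affine_function_on_affine_set:
  fixes H :: "'a::real_vector \<Rightarrow> real"
  assumes "affine A" "a \<in> A"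
    and comb: "\<And>x y u. x \<in> A \<Longrightarrow> y \<in> A \<Longrightarrow>
      H (u *\<^sub>R x + (1 - u) *\<^sub>R y) = u * H x + (1 - u) * H y"
  obtains l c where "linear l" "\<And>x. x \<in> A \<Longrightarrow> H x = l x + c"
proof -
  define L where "L = (\<lambda>x. x - a) ` A"
  have L: "subspace L"
    unfolding L_def using affine_diffs_subspace_subtract[OF assms(1,2)] .
  have inA: "a + v \<in> A" if "v \<in> L" for v
    using that unfolding L_def by auto
  define f where "f v = H (a + v) - H a" for v
  have scale: "f (t *\<^sub>R v) = t * f v" if "v \<in> L" for t v
  proof -
    have "t *\<^sub>R (a + v) + (1 - t) *\<^sub>R a = a + t *\<^sub>R v"
      by (simp add: algebra_simps)
    then show ?thesis
      using comb[OF inA[OF that] \<open>a \<in> A\<close>, of t] unfolding f_def by (simp add: algebra_simps)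
  qed
  have add: "f (v + w) = f v + f w" if "v \<in> L" "w \<in> L" for v w
  proof -
    have "(1/2) *\<^sub>R (a + (v + w)) + (1 - 1/2) *\<^sub>R a = (1/2) *\<^sub>R (a + v) + (1 - 1/2) *\<^sub>R (a + w)"
      by (simp add: algebra_simps)
    then have "(1/2) * H (a + (v + w)) + (1/2) * H a = (1/2) * H (a + v) + (1/2) * H (a + w)"
      using comb[OF inA[OF subspace_add[OF L that]] \<open>a \<in> A\<close>, of "1/2"]
        comb[OF inA[OF that(1)] inA[OF that(2)], of "1/2"] by simp
    then show ?thesis
      unfolding f_def by simp
  qed
  obtain g where g: "linear g" "\<And>v. v \<in> L \<Longrightarrow> g v = f v"
    using linear_extension_from_subspace[OF L add scale] by blast
  have "H x = g x + (H a - g a)" if "x \<in> A" for x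
    using g(2)[of "x - a"] that linear_diff[OF g(1)] unfolding L_def f_def by auto
  then show ?thesis
    using that g(1) by blast
qed

lemma affine_on_set_if_finite:
  fixes h :: "'a::real_vector \<Rightarrow> ereal"
  assumes "affine A" "A \<noteq> {}"
    and epi: "convex (ereal_epigraph A h)" and hyp: "convex (ereal_hypograph A h)"
    and finite: "\<forall>x\<in>A. \<bar>h x\<bar> \<noteq> \<infinity>"
  shows "affine_on_set h A"
proof -
  define H where "H x = real_of_ereal (h x)" for x
  have hH: "h x = ereal (H x)" if "x \<in> A" for x
    using finite that unfolding H_def by (cases "h x") auto
  have "H (u *\<^sub>R x + (1 - u) *\<^sub>R y) = u * H x + (1 - u) * H y"
    if "x \<in> A" "y \<in> A" "0 \<le> u" "u \<le> 1" for x y u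
  proof -
    have z: "u *\<^sub>R x + (1 - u) *\<^sub>R y \<in> A"
      using mem_affine[OF \<open>affine A\<close> that(1,2)] by simp
    have "H (u *\<^sub>R x + (1 - u) *\<^sub>R y) \<le> u * H x + (1 - u) * H y"
      using convex_ereal_epigraphD[OF epi, of x y "H x" "H y" u "1 - u"] that hH z by simp
    moreover have "- H (u *\<^sub>R x + (1 - u) *\<^sub>R y) \<le> u * - H x + (1 - u) * - H y"
      using convex_ereal_epigraphD[OF hyp[unfolded convex_ereal_hypograph_iff],
          of x y "- H x" "- H y" u "1 - u"] that hH z by simp
    ultimately show ?thesis by linarith
  qed
  then have "H (u *\<^sub>R x + (1 - u) *\<^sub>R y) = u * H x + (1 - u) * H y" if "x \<in> A" "y \<in> A" for x y u
    using affine_combination_if_convex_combination[OF \<open>affine A\<close> _ that] by blast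
  then obtain l c where "linear l" "\<And>x. x \<in> A \<Longrightarrow> H x = l x + c"
    using affine_function_on_affine_set[OF \<open>affine A\<close>] \<open>A \<noteq> {}\<close> by blast
  then show ?thesis
    unfolding affine_on_set_def using hH by auto
qed

text \<open>Reflect \<open>x\<^sub>0\<close> through \<open>y\<close>: \<open>y\<close> is the midpoint of \<open>x\<^sub>0\<close> and \<open>2y - x\<^sub>0\<close>.\<close>

lemma minus_infinity_on_affine_set:
  fixes h :: "'a::real_vector \<Rightarrow> ereal"
  assumes "affine A" "convex (ereal_epigraph A h)"
    and "x\<^sub>0 \<in> A" "h x\<^sub>0 = -\<infinity>" "\<forall>x\<in>A. h x \<noteq> \<infinity>" "y \<in> A"
  shows "h y = -\<infinity>"
proof -
  define z where "z = 2 *\<^sub>R y + (-1) *\<^sub>R x\<^sub>0"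
  have "z \<in> A"
    unfolding z_def using mem_affine[OF \<open>affine A\<close> \<open>y \<in> A\<close> \<open>x\<^sub>0 \<in> A\<close>, of 2 "-1"] by simp
  moreover have "(1/2) *\<^sub>R x\<^sub>0 + (1 - 1/2) *\<^sub>R z = y"
    unfolding z_def by (simp add: algebra_simps)
  ultimately show ?thesis
    using ereal_epigraph_mix_minus_infinity[OF assms(2) \<open>x\<^sub>0 \<in> A\<close> _ \<open>h x\<^sub>0 = -\<infinity>\<close>, of z "1/2"]
      assms(5) by simp
qed

lemma separating_level_in_affine_set:
  fixes A P Q :: "'a::euclidean_space set"
  assumes "affine A" "convex P" "convex Q" "P \<subseteq> A" "Q \<subseteq> A" "P \<noteq> {}" "Q \<noteq> {}" "P \<inter> Q = {}"
  obtains a d where "\<And>c. \<exists>x\<in>A. a \<bullet> x = c" "\<And>p. p \<in> P \<Longrightarrow> d \<le> a \<bullet> p"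
    "\<And>q. q \<in> Q \<Longrightarrow> a \<bullet> q \<le> d"
proof -
  define S where "S = (\<Union>p\<in>P. \<Union>q\<in>Q. {p - q})"
  have "convex S" "S \<noteq> {}" "0 \<notin> S"
    unfolding S_def using convex_differences[OF assms(2,3)] assms(6-8) by auto
  then obtain a where a: "a \<in> span S" "a \<noteq> 0" "\<And>s. s \<in> S \<Longrightarrow> 0 \<le> a \<bullet> s"
    using separating_hyperplane_set_0_inspan by blast
  obtain a\<^sub>0 where "a\<^sub>0 \<in> A"
    using assms(4,6) by blast
  define L where "L = (\<lambda>x. x - a\<^sub>0) ` A"
  have L: "subspace L"
    unfolding L_def using affine_diffs_subspace_subtract[OF assms(1) \<open>a\<^sub>0 \<in> A\<close>] .
  have "S \<subseteq> L"
  proof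
    fix s assume "s \<in> S"
    then obtain p q where "p \<in> A" "q \<in> A" "s = p - q"
      unfolding S_def using assms(4,5) by blast
    then have "a\<^sub>0 + 1 *\<^sub>R (p - q) \<in> A"
      using mem_affine_3_minus[OF assms(1) \<open>a\<^sub>0 \<in> A\<close>] by blast
    then show "s \<in> L"
      unfolding L_def using \<open>s = p - q\<close> by (force intro: image_eqI[of _ _ "a\<^sub>0 + (p - q)"])
  qed
  then have "a \<in> L"
    using a(1) span_minimal[OF _ L] by blast
  have level: "\<exists>x\<in>A. a \<bullet> x = c" for c
  proof -
    have "((c - a \<bullet> a\<^sub>0) / (a \<bullet> a)) *\<^sub>R a \<in> L"
      using subspace_scale[OF L \<open>a \<in> L\<close>] .
    then have "a\<^sub>0 + ((c - a \<bullet> a\<^sub>0) / (a \<bullet> a)) *\<^sub>R a \<in> A"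
      unfolding L_def by auto
    moreover have "a \<bullet> (a\<^sub>0 + ((c - a \<bullet> a\<^sub>0) / (a \<bullet> a)) *\<^sub>R a) = c"
      using \<open>a \<noteq> 0\<close> by (simp add: inner_add_right)
    ultimately show ?thesis by blast
  qed
  have PQ: "a \<bullet> q \<le> a \<bullet> p" if "p \<in> P" "q \<in> Q" for p q
    using a(3)[of "p - q"] that unfolding S_def by (auto simp: inner_diff_right)
  define d where "d = Inf ((\<lambda>p. a \<bullet> p) ` P)"
  have "bdd_below ((\<lambda>p. a \<bullet> p) ` P)"
    using PQ \<open>Q \<noteq> {}\<close> unfolding bdd_below_def by blast
  then have "d \<le> a \<bullet> p" if "p \<in> P" for p
    unfolding d_def using that by (simp add: cInf_lower)
  moreover have "a \<bullet> q \<le> d" if "q \<in> Q" for q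
    unfolding d_def using PQ that \<open>P \<noteq> {}\<close> by (auto intro: cInf_greatest)
  ultimately show ?thesis
    using that level by blast
qed

lemma separating_level_of_infinities:
  fixes h :: "'a::euclidean_space \<Rightarrow> ereal"
  assumes "affine A" and epi: "convex (ereal_epigraph A h)" and hyp: "convex (ereal_hypograph A h)"
    and "\<exists>x\<in>A. h x = \<infinity>" "\<exists>x\<in>A. h x \<noteq> \<infinity>"
  obtains a d where "\<And>c. \<exists>x\<in>A. a \<bullet> x = c"
    "\<forall>x\<in>A. a \<bullet> x > d \<longrightarrow> h x = \<infinity>" "\<forall>x\<in>A. a \<bullet> x < d \<longrightarrow> h x = -\<infinity>"
proof -
  define P where "P = {x \<in> A. h x = \<infinity>}"
  define Q where "Q = {x \<in> A. h x \<noteq> \<infinity>}"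
  have epi': "convex (ereal_epigraph A (\<lambda>x. - h x))"
    using hyp by (simp add: convex_ereal_hypograph_iff)
  have "P = {x \<in> A. - h x = -\<infinity>}"
    unfolding P_def by auto
  then have "convex P"
    using convex_minus_infinity_set[OF epi'] by simp
  have "\<exists>\<mu>. h x \<le> ereal \<mu>" if "h x \<noteq> \<infinity>" for x
    using that by (cases "h x") auto
  then have "Q = fst ` ereal_epigraph A h"
    unfolding Q_def ereal_epigraph_def by (force simp: image_iff)
  then have "convex Q"
    using convex_linear_image[OF linear_fst epi] by simp
  obtain a d where level: "\<And>c. \<exists>x\<in>A. a \<bullet> x = c"
    and P: "\<And>p. p \<in> P \<Longrightarrow> d \<le> a \<bullet> p" and Q: "\<And>q. q \<in> Q \<Longrightarrow> a \<bullet> q \<le> d"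
    using separating_level_in_affine_set[OF \<open>affine A\<close> \<open>convex P\<close> \<open>convex Q\<close>] assms(4,5)
    unfolding P_def Q_def by blast
  have above: "\<forall>x\<in>A. a \<bullet> x > d \<longrightarrow> h x = \<infinity>"
    using Q unfolding Q_def by force
  have "h y = -\<infinity>" if "y \<in> A" "a \<bullet> y < d" for y
  proof (rule ccontr)
    assume "h y \<noteq> -\<infinity>"
    then have "- h y \<noteq> \<infinity>"
      by (cases "h y") auto
    obtain x where x: "x \<in> A" "a \<bullet> x = d + 1"
      using level by blast
    define u where "u = (d - a \<bullet> y) / (2 * (a \<bullet> x - a \<bullet> y))"
    have "0 < u" "u \<le> 1"
      unfolding u_def using x that by (simp_all add: field_simps)
    then have z: "u *\<^sub>R x + (1 - u) *\<^sub>R y \<in> P"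
      using ereal_epigraph_mix_minus_infinity[OF epi' x(1) \<open>y \<in> A\<close> _ \<open>- h y \<noteq> \<infinity>\<close>] above x
      unfolding P_def by simp
    have "a \<bullet> (u *\<^sub>R x + (1 - u) *\<^sub>R y) = a \<bullet> y + u * (a \<bullet> x - a \<bullet> y)"
      by (simp add: inner_add_right algebra_simps)
    also have "\<dots> = (a \<bullet> y + d) / 2"
      unfolding u_def using x that by (simp add: field_simps)
    finally show False
      using P[OF z] that by simp
  qed
  then show ?thesis
    using that level above by blast
qed

lemma aff_dim_hyperplane_section_less:
  fixes A :: "'a::euclidean_space set"
  assumes "affine A" "x \<in> A" "a \<bullet> x = d" "y \<in> A" "a \<bullet> y \<noteq> d"
  shows "nat (aff_dim (A \<inter> {x. a \<bullet> x = d})) < nat (aff_dim A)"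
proof -
  have "A \<inter> {x. a \<bullet> x = d} \<noteq> {}" "\<not> A \<subseteq> {x. a \<bullet> x = d}"
    using assms(2-5) by blast+
  moreover from this(1) have "aff_dim (A \<inter> {x. a \<bullet> x = d}) \<ge> 0"
    using aff_dim_negative_iff by (metis not_le)
  ultimately show ?thesis
    using aff_dim_affine_Int_hyperplane[OF assms(1)] by simp
qed

theorem stratification_exists:
  fixes h :: "'a::euclidean_space \<Rightarrow> ereal"
  assumes "affine A" "A \<noteq> {}" "convex (ereal_epigraph A h)" "convex (ereal_hypograph A h)"
  shows "\<exists>eta delta. stratified_on h A eta delta \<and> proper_splits A eta delta"
  using assms
proof (induction "nat (aff_dim A)" arbitrary: A rule: less_induct)
  case less
  note A = less.prems
  have trivial: "\<exists>eta delta. stratified_on h A eta delta \<and> proper_splits A eta delta"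
    if "affine_on_set h A \<or> constant_on_set h A"
    using that by (auto simp: stratified_on_Nil proper_splits_def intro!: exI[of _ "[]"])
  consider "\<forall>x\<in>A. \<bar>h x\<bar> \<noteq> \<infinity>" | "\<forall>x\<in>A. h x \<noteq> \<infinity>" "\<exists>x\<in>A. h x = -\<infinity>"
    | "\<forall>x\<in>A. h x = \<infinity>" | "\<exists>x\<in>A. h x = \<infinity>" "\<exists>x\<in>A. h x \<noteq> \<infinity>"
    by auto
  then show ?case
  proof cases
    case 1
    then show ?thesis using trivial affine_on_set_if_finite[OF A] by blast
  next
    case 2
    then show ?thesis
      using trivial minus_infinity_on_affine_set[OF A(1,3)] unfolding constant_on_set_def by blast
  next
    case 3
    then show ?thesis using trivial unfolding constant_on_set_def by blast
  next
    case 4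
    then obtain a d where level: "\<And>c. \<exists>x\<in>A. a \<bullet> x = c"
      and infinities: "\<forall>x\<in>A. a \<bullet> x > d \<longrightarrow> h x = \<infinity>" "\<forall>x\<in>A. a \<bullet> x < d \<longrightarrow> h x = -\<infinity>"
      using separating_level_of_infinities[OF A(1,3,4)] by blast
    define A' where "A' = A \<inter> {x. a \<bullet> x = d}"
    have "A' \<noteq> {}"
      unfolding A'_def using level[of d] by force
    have "nat (aff_dim A') < nat (aff_dim A)"
      unfolding A'_def using aff_dim_hyperplane_section_less[OF A(1)] level[of d] level[of "d + 1"]
      by force
    moreover have "affine A'"
      unfolding A'_def using affine_Int[OF A(1) affine_hyperplane] .
    ultimately obtain eta delta where "stratified_on h A' eta delta" "proper_splits A' eta delta"
      using less.hyps[of A'] \<open>A' \<noteq> {}\<close> A(3,4)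
      unfolding A'_def by (blast intro: convex_ereal_epigraph_Int convex_ereal_hypograph_Int
          convex_hyperplane)
    moreover have "linear (\<lambda>x. a \<bullet> x)"
      by (simp add: linear_iff inner_add_right)
    moreover have "{x \<in> A. a \<bullet> x = d} = A'"
      unfolding A'_def by blast
    ultimately have "stratified_on h A ((\<lambda>x. a \<bullet> x) # eta) (d # delta) \<and>
        proper_splits A ((\<lambda>x. a \<bullet> x) # eta) (d # delta)"
      using infinities level[of "d + 1"] level[of "d - 1"] \<open>A' \<noteq> {}\<close>
      by (simp add: stratified_on_Cons proper_splits_Cons) force
    then show ?thesis by blast
  qed
qed

text \<open>Take the last nonzero coefficient \<open>c\<^sub>k\<close> and points \<open>x\<close>, \<open>y\<close> of \<open>H\<^sub>k\<close> on opposite sides of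
  the \<open>k\<close>-th hyperplane: the earlier functionals agree at \<open>x\<close> and \<open>y\<close>, so the vanishing
  combination leaves \<open>c\<^sub>k (\<eta>\<^sub>k x - \<eta>\<^sub>k y) = 0\<close>.\<close>

lemma lin_indep_functionals_if_proper_splits:
  assumes "proper_splits A eta delta"
  shows "lin_indep_functionals eta"
  unfolding lin_indep_functionals_def
proof (rule allI, rule impI)
  fix c :: "nat \<Rightarrow> real"
  assume vanish: "\<forall>x. (\<Sum>i<length eta. c i * (eta ! i) x) = 0"
  show "\<forall>i<length eta. c i = 0"
  proof (rule ccontr)
    assume "\<not> (\<forall>i<length eta. c i = 0)"
    define S where "S = {i. i < length eta \<and> c i \<noteq> 0}"
    define k where "k = Max S"
    have "finite S" "S \<noteq> {}"
      unfolding S_def using \<open>\<not> (\<forall>i<length eta. c i = 0)\<close> by auto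
    then have "k \<in> S" "\<And>i. i \<in> S \<Longrightarrow> i \<le> k"
      unfolding k_def by simp_all
    then have k: "k < length eta" "c k \<noteq> 0" and last: "\<And>i. k < i \<Longrightarrow> i < length eta \<Longrightarrow> c i = 0"
      unfolding S_def by (auto simp: not_le[symmetric])
    obtain x y where x: "x \<in> Hset_on A eta delta k" "(eta ! k) x > delta ! k"
      and y: "y \<in> Hset_on A eta delta k" "(eta ! k) y < delta ! k"
      using assms k(1) unfolding proper_splits_def by blast
    let ?F = "\<lambda>i. c i * ((eta ! i) x - (eta ! i) y)"
    have "?F i = 0" if "i \<in> {..<length eta} - {k}" for i
      using that Hset_on_level[OF x(1)] Hset_on_level[OF y(1)] last[of i] by (cases "i < k") auto
    then have "(\<Sum>i\<in>{..<length eta} - {k}. ?F i) = 0"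
      by (rule sum.neutral[rule_format])
    then have "(\<Sum>i<length eta. ?F i) = ?F k"
      using k(1) by (simp add: sum.remove[of _ k])
    moreover have "(\<Sum>i<length eta. ?F i) = 0"
      using vanish[rule_format, of x] vanish[rule_format, of y]
      by (simp add: right_diff_distrib sum_subtractf)
    ultimately show False
      using k(2) x(2) y(2) by simp
  qed
qed

theorem theorem5:
  fixes h :: "'a::euclidean_space \<Rightarrow> ereal"
  shows "generalized_affine h \<longleftrightarrow>
    (\<exists>(eta :: ('a \<Rightarrow> real) list) (delta :: real list).
       length delta = length eta \<and>
       (\<forall>i<length eta. linear (eta ! i)) \<and>
       lin_indep_functionals eta \<and>
       (\<forall>i<length eta. Hset eta delta (Suc i) \<noteq> {} \<and>
                        Cplus eta delta i \<noteq> {} \<and> Cminus eta delta i \<noteq> {}) \<and>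
       (\<forall>i<length eta. \<forall>x\<in>Cplus eta delta i. h x = \<infinity>) \<and>
       (\<forall>i<length eta. \<forall>x\<in>Cminus eta delta i. h x = - \<infinity>) \<and>
       (affine_on_set h (Hset eta delta (length eta)) \<or>
        constant_on_set h (Hset eta delta (length eta))))"
    (is "_ \<longleftrightarrow> (\<exists>eta delta. ?form eta delta)")
proof -
  have form_iff: "?form eta delta \<longleftrightarrow> stratified_on h UNIV eta delta \<and>
      proper_splits UNIV eta delta \<and> lin_indep_functionals eta" for eta delta
    by (auto simp: stratified_on_def proper_splits_def Cplus_def Cminus_def Hset_eq_Hset_on_UNIV)
  show ?thesis
  proof
    assume "generalized_affine h"
    then obtain eta delta where "stratified_on h UNIV eta delta" "proper_splits UNIV eta delta"
      using stratification_exists[of UNIV h] by (auto simp: generalized_affine_iff_convex_graphs)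
    then show "\<exists>eta delta. ?form eta delta"
      using form_iff lin_indep_functionals_if_proper_splits by blast
  next
    assume "\<exists>eta delta. ?form eta delta"
    then obtain eta delta where "stratified_on h UNIV eta delta"
      using form_iff by blast
    then show "generalized_affine h"
      by (simp add: generalized_affine_iff_convex_graphs convex_UNIV
          convex_ereal_epigraph_stratified convex_ereal_hypograph_stratified)
  qed
qed

end
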